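(* Let $X$ be a $d$-space such that ${\downarrow}(C\cap K)$ is closed for every nonempty closed set $C\neq X$ and every $K\in K(X)$. Then $X$ is $S^{\ast}$-well-filtered.
   Context: All spaces are $T_0$. The specialization order of $X$ is given by $x\le y$ iff $x\in cl(\{y\})$; ${\uparrow},{\downarrow}$ are taken with respect to it; a subset is saturated if it is an upper set in the specialization order. A $d$-space is a $T_0$-space that is a dcpo in its specialization order and whose open sets are all Scott open with respect to that order. $K(X)$ denotes the set of all nonempty compact saturated subsets of $X$; a family in $K(X)$ is filtered if any two members contain a common member. $X$ is $S^{\ast}$-well-filtered if for every filtered family $\{K_i\mid i\in I\}\subseteq K(X)$, every $G\in K(X)$ and every nonempty open $U$, $\bigcap_{i\in I}K_i\cap G\subseteq U$ implies $K_i\cap G\subseteq U$ for some $i$. *)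

theory Defs
  imports "HOL-Analysis.Analysis"
begin

definition spec_le :: "'a topology \<Rightarrow> 'a \<Rightarrow> 'a \<Rightarrow> bool" where
  "spec_le X x y \<longleftrightarrow> x \<in> topspace X \<and> y \<in> topspace X \<and> x \<in> X closure_of {y}"

definition down_set :: "'a topology \<Rightarrow> 'a set \<Rightarrow> 'a set" where
  "down_set X A = {x \<in> topspace X. \<exists>a\<in>A. spec_le X x a}"

definition saturated :: "'a topology \<Rightarrow> 'a set \<Rightarrow> bool" where
  "saturated X A \<longleftrightarrow> A \<subseteq> topspace X \<and> (\<forall>x\<in>A. \<forall>y. spec_le X x y \<longrightarrow> y \<in> A)"

definition KX :: "'a topology \<Rightarrow> 'a set set" where
  "KX X = {K. K \<noteq> {} \<and> compactin X K \<and> saturated X K}"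

definition directed_in :: "'a topology \<Rightarrow> 'a set \<Rightarrow> bool" where
  "directed_in X D \<longleftrightarrow> D \<noteq> {} \<and> D \<subseteq> topspace X \<and>
     (\<forall>a\<in>D. \<forall>b\<in>D. \<exists>c\<in>D. spec_le X a c \<and> spec_le X b c)"

definition is_sup_in :: "'a topology \<Rightarrow> 'a set \<Rightarrow> 'a \<Rightarrow> bool" where
  "is_sup_in X D s \<longleftrightarrow> s \<in> topspace X \<and> (\<forall>d\<in>D. spec_le X d s) \<and>
     (\<forall>u\<in>topspace X. (\<forall>d\<in>D. spec_le X d u) \<longrightarrow> spec_le X s u)"

definition spec_dcpo :: "'a topology \<Rightarrow> bool" where
  "spec_dcpo X \<longleftrightarrow> (\<forall>D. directed_in X D \<longrightarrow> (\<exists>s. is_sup_in X D s))"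

definition scott_open_in :: "'a topology \<Rightarrow> 'a set \<Rightarrow> bool" where
  "scott_open_in X U \<longleftrightarrow> saturated X U \<and>
     (\<forall>D s. directed_in X D \<and> is_sup_in X D s \<and> s \<in> U \<longrightarrow> D \<inter> U \<noteq> {})"

definition d_space :: "'a topology \<Rightarrow> bool" where
  "d_space X \<longleftrightarrow> t0_space X \<and> spec_dcpo X \<and> (\<forall>U. openin X U \<longrightarrow> scott_open_in X U)"

definition filtered_K :: "'a topology \<Rightarrow> 'a set set \<Rightarrow> bool" where
  "filtered_K X \<K> \<longleftrightarrow> \<K> \<noteq> {} \<and> \<K> \<subseteq> KX X \<and>
     (\<forall>K1\<in>\<K>. \<forall>K2\<in>\<K>. \<exists>K3\<in>\<K>. K3 \<subseteq> K1 \<and> K3 \<subseteq> K2)"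

definition S_star_well_filtered :: "'a topology \<Rightarrow> bool" where
  "S_star_well_filtered X \<longleftrightarrow>
     (\<forall>\<K> G U. filtered_K X \<K> \<and> G \<in> KX X \<and> openin X U \<and> U \<noteq> {} \<and> \<Inter>\<K> \<inter> G \<subseteq> U
        \<longrightarrow> (\<exists>K\<in>\<K>. K \<inter> G \<subseteq> U))"

end

theory Submission
  imports Defs
begin

text \<open>
  Suppose \<open>\<Inter>\<K> \<inter> G \<subseteq> U\<close> but no \<open>K \<inter> G\<close> lies in \<open>U\<close>. Then the closed set
  \<open>B = \<down>((X - U) \<inter> G)\<close> meets every \<open>K \<in> \<K>\<close>, and \<open>B \<noteq> X\<close> because a maximal point above
  a point of \<open>U\<close> stays in \<open>U\<close>. By compactness and Zorn's lemma, \<open>B\<close> contains a closed set \<open>A\<close>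
  that is minimal among closed sets meeting every \<open>K\<close>. The hypothesis makes \<open>\<down>(A \<inter> K)\<close> closed,
  and filteredness makes it meet every member of \<open>\<K>\<close>, so \<open>A = \<down>(A \<inter> K)\<close> by minimality.
  Hence a maximal point of \<open>A\<close>, which exists since \<open>X\<close> is a d-space, lies in every \<open>K\<close>;
  a point of \<open>(X - U) \<inter> G\<close> above it then lies in \<open>\<Inter>\<K> \<inter> G - U\<close>, a contradiction.
\<close>

lemma spec_le_iff_openin:
  "spec_le X x y \<longleftrightarrow> x \<in> topspace X \<and> y \<in> topspace X \<and> (\<forall>U. openin X U \<and> x \<in> U \<longrightarrow> y \<in> U)"
  unfolding spec_le_def in_closure_of by auto

lemma spec_le_refl: "x \<in> topspace X \<Longrightarrow> spec_le X x x"
  by (simp add: spec_le_iff_openin)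

lemma spec_le_trans: "spec_le X x y \<Longrightarrow> spec_le X y z \<Longrightarrow> spec_le X x z"
  by (simp add: spec_le_iff_openin)

lemma openin_spec_le_upward: "openin X U \<Longrightarrow> x \<in> U \<Longrightarrow> spec_le X x y \<Longrightarrow> y \<in> U"
  unfolding spec_le_iff_openin by blast

lemma spec_le_antisym:
  assumes "t0_space X" "spec_le X x y" "spec_le X y x"
  shows "x = y"
proof (rule ccontr)
  assume "x \<noteq> y"
  moreover have "x \<in> topspace X" "y \<in> topspace X"
    using assms(2) by (auto simp: spec_le_def)
  ultimately obtain U where "openin X U" "x \<notin> U \<longleftrightarrow> y \<in> U"
    using assms(1) unfolding t0_space_def by blast
  then show False
    using openin_spec_le_upward assms(2,3) by metis
qed

lemma t0_space_spec_le_partial_order: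
  assumes "t0_space X" "S \<subseteq> topspace X"
  shows "partial_order_on S (relation_of (spec_le X) S)"
proof (rule partial_order_on_relation_ofI)
  show "spec_le X p p" if "p \<in> S" for p
    using that assms(2) spec_le_refl[of p X] by auto
  show "spec_le X p r" if "spec_le X p q" "spec_le X q r" for p q r
    using that by (rule spec_le_trans)
  show "p = q" if "spec_le X p q" "spec_le X q p" for p q
    using spec_le_antisym[OF assms(1) that] .
qed

lemma closedin_spec_le_downward:
  assumes "closedin X C" "y \<in> C" "spec_le X x y"
  shows "x \<in> C"
proof -
  have "openin X (topspace X - C)"
    using assms(1) by auto
  then show ?thesis
    using assms(2,3) openin_spec_le_upward unfolding spec_le_iff_openin by blast
qed

lemma subset_down_set: "S \<subseteq> topspace X \<Longrightarrow> S \<subseteq> down_set X S"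
  unfolding down_set_def by (auto intro: spec_le_refl)

lemma down_set_subset_closedin:
  assumes "closedin X A" "S \<subseteq> A"
  shows "down_set X S \<subseteq> A"
  using assms(2) closedin_spec_le_downward[OF assms(1)] unfolding down_set_def by blast

lemma saturated_spec_le_upward: "saturated X K \<Longrightarrow> x \<in> K \<Longrightarrow> spec_le X x y \<Longrightarrow> y \<in> K"
  unfolding saturated_def by blast

lemma directed_in_chain:
  assumes "C \<noteq> {}" "C \<subseteq> topspace X" "\<And>p q. p \<in> C \<Longrightarrow> q \<in> C \<Longrightarrow> spec_le X p q \<or> spec_le X q p"
  shows "directed_in X C"
  unfolding directed_in_def
proof (intro conjI ballI)
  fix p q assume pq: "p \<in> C" "q \<in> C"
  then have "spec_le X p p" "spec_le X q q"
    using assms(2) spec_le_refl[of p X] spec_le_refl[of q X] by auto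
  then show "\<exists>c\<in>C. spec_le X p c \<and> spec_le X q c"
    using assms(3)[OF pq] pq by blast
qed (use assms in auto)

lemma d_space_closedin_directed_sup:
  assumes "d_space X" "closedin X A" "directed_in X D" "D \<subseteq> A" "is_sup_in X D s"
  shows "s \<in> A"
proof (rule ccontr)
  assume "s \<notin> A"
  then have "s \<in> topspace X - A"
    using assms(5) unfolding is_sup_in_def by auto
  moreover have "scott_open_in X (topspace X - A)"
    using assms(1) openin_diff[OF openin_topspace assms(2)] unfolding d_space_def by blast
  ultimately have "D \<inter> (topspace X - A) \<noteq> {}"
    using assms(3,5) unfolding scott_open_in_def by blast
  then show False
    using assms(4) by blast
qed

lemma d_space_closedin_chain_bounded:
  assumes "d_space X" "closedin X A" "C \<noteq> {}" "C \<subseteq> A"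
    and "\<And>p q. p \<in> C \<Longrightarrow> q \<in> C \<Longrightarrow> spec_le X p q \<or> spec_le X q p"
  shows "\<exists>s\<in>A. \<forall>c\<in>C. spec_le X c s"
proof -
  have "directed_in X C"
    using assms(3-5) closedin_subset[OF assms(2)] by (intro directed_in_chain) auto
  then obtain s where s: "is_sup_in X C s"
    using assms(1) unfolding d_space_def spec_dcpo_def by blast
  then have "s \<in> A"
    using d_space_closedin_directed_sup[OF assms(1,2) \<open>directed_in X C\<close> assms(4)] by blast
  then show ?thesis
    using s unfolding is_sup_in_def by blast
qed

lemma d_space_maximal_above:
  assumes "d_space X" "closedin X A" "a \<in> A"
  obtains m where "m \<in> A" "spec_le X a m" "\<And>y. y \<in> A \<Longrightarrow> spec_le X m y \<Longrightarrow> y = m"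
proof -
  define B where "B = {y \<in> A. spec_le X a y}"
  have A_top: "A \<subseteq> topspace X"
    using assms(2) closedin_subset by auto
  have "partial_order_on B (relation_of (spec_le X) B)"
    using assms(1) A_top unfolding d_space_def B_def
    by (intro t0_space_spec_le_partial_order) auto
  moreover have "\<exists>u\<in>B. \<forall>c\<in>C. spec_le X c u" if C: "C \<in> Chains (relation_of (spec_le X) B)" for C
  proof (cases "C = {}")
    case True
    then show ?thesis
      using assms(3) A_top spec_le_refl[of a X] unfolding B_def by auto
  next
    case False
    have C_B: "C \<subseteq> B"
      using C unfolding Chains_def relation_of_def by auto
    have "\<exists>s\<in>A. \<forall>c\<in>C. spec_le X c s"
    proof (rule d_space_closedin_chain_bounded[OF assms(1,2) False])
      show "C \<subseteq> A"
        using C_B unfolding B_def by auto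
      show "spec_le X p q \<or> spec_le X q p" if "p \<in> C" "q \<in> C" for p q
        using C that unfolding Chains_def relation_of_def by auto
    qed
    then obtain s where "s \<in> A" and s: "\<forall>c\<in>C. spec_le X c s"
      by blast
    then have "s \<in> B"
      using False C_B spec_le_trans[of X a _ s] unfolding B_def by blast
    then show ?thesis
      using s by blast
  qed
  ultimately have "\<exists>m\<in>B. \<forall>b\<in>B. spec_le X m b \<longrightarrow> b = m"
    by (rule predicate_Zorn)
  then obtain m where m: "m \<in> B" "\<forall>b\<in>B. spec_le X m b \<longrightarrow> b = m"
    by blast
  show thesis
  proof (rule that)
    show "m \<in> A" "spec_le X a m"
      using m(1) unfolding B_def by auto
    show "y = m" if "y \<in> A" "spec_le X m y" for y
      using m that spec_le_trans[OF \<open>spec_le X a m\<close> that(2)] unfolding B_def by blast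
  qed
qed

text \<open>A maximal point above a point of \<open>U\<close> lies in \<open>U\<close>, but would have to lie in \<open>S\<close>.\<close>
lemma d_space_down_set_ne_topspace:
  assumes "d_space X" "openin X U" "U \<noteq> {}" "S \<inter> U = {}"
  shows "down_set X S \<noteq> topspace X"
proof
  assume down_S: "down_set X S = topspace X"
  obtain u where u: "u \<in> U"
    using assms(3) by auto
  then have "u \<in> topspace X"
    using openin_subset[OF assms(2)] by auto
  then obtain m where m: "m \<in> topspace X" "spec_le X u m"
    and m_max: "\<And>y. y \<in> topspace X \<Longrightarrow> spec_le X m y \<Longrightarrow> y = m"
    using d_space_maximal_above[OF assms(1) closedin_topspace] by blast
  have "m \<in> U"
    using openin_spec_le_upward[OF assms(2) u m(2)] .
  obtain s where s: "s \<in> S" "spec_le X m s"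
    using m(1) down_S unfolding down_set_def by auto
  then have "s = m"
    using m_max[of s] unfolding spec_le_def by auto
  then show False
    using s(1) \<open>m \<in> U\<close> assms(4) by blast
qed

lemma compactin_subset_Union_chain:
  assumes "compactin X K" "K \<noteq> {}" "subset.chain \<A> \<C>" "\<forall>V\<in>\<C>. openin X V" "K \<subseteq> \<Union>\<C>"
  shows "\<exists>V\<in>\<C>. K \<subseteq> V"
proof -
  obtain \<F> where \<F>: "finite \<F>" "\<F> \<subseteq> \<C>" "K \<subseteq> \<Union>\<F>"
    using assms(1,4,5) unfolding compactin_def by meson
  moreover have "\<F> \<noteq> {}"
    using \<F>(3) assms(2) by auto
  moreover have "subset.chain \<A> \<F>"
    using assms(3) \<F>(2) unfolding subset_chain_def by (meson subset_iff)
  ultimately show ?thesis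
    using Union_in_chain[of \<F> \<A>] by blast
qed

definition minimal_closed_meeting :: "'a topology \<Rightarrow> 'a set set \<Rightarrow> 'a set \<Rightarrow> bool" where
  "minimal_closed_meeting X \<K> A \<longleftrightarrow> closedin X A \<and> (\<forall>K\<in>\<K>. A \<inter> K \<noteq> {}) \<and>
     (\<forall>A'. closedin X A' \<and> A' \<subseteq> A \<and> (\<forall>K\<in>\<K>. A' \<inter> K \<noteq> {}) \<longrightarrow> A' = A)"

text \<open>Zorn's lemma applied to the complements; compactness keeps the union of a chain admissible.\<close>
lemma exists_minimal_closed_meeting:
  assumes compact: "\<And>K. K \<in> \<K> \<Longrightarrow> compactin X K"
    and "closedin X B" and B_meets: "\<forall>K\<in>\<K>. B \<inter> K \<noteq> {}"
  shows "\<exists>A\<subseteq>B. minimal_closed_meeting X \<K> A"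
proof -
  define \<O> where "\<O> = {V. openin X V \<and> topspace X - B \<subseteq> V \<and> (\<forall>K\<in>\<K>. \<not> K \<subseteq> V)}"
  have "topspace X - B \<in> \<O>"
    using \<open>closedin X B\<close> B_meets unfolding \<O>_def by blast
  moreover have "\<Union>\<C> \<in> \<O>" if "\<C> \<noteq> {}" and chain: "subset.chain \<O> \<C>" for \<C>
  proof -
    have \<C>_\<O>: "\<C> \<subseteq> \<O>"
      using chain unfolding subset_chain_def by auto
    then have \<C>_open: "\<forall>V\<in>\<C>. openin X V"
      unfolding \<O>_def by auto
    have "\<not> K \<subseteq> \<Union>\<C>" if "K \<in> \<K>" for K
      using compactin_subset_Union_chain[OF compact[OF that] _ chain \<C>_open] B_meets that \<C>_\<O>
      unfolding \<O>_def by blast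
    then show ?thesis
      using \<C>_\<O> \<open>\<C> \<noteq> {}\<close> unfolding \<O>_def by auto
  qed
  ultimately obtain V where "V \<in> \<O>" and V_max: "\<And>W. W \<in> \<O> \<Longrightarrow> V \<subseteq> W \<Longrightarrow> W = V"
    using subset_Zorn_nonempty[of \<O>] by blast
  have V: "openin X V" "topspace X - B \<subseteq> V" "\<forall>K\<in>\<K>. \<not> K \<subseteq> V"
    using \<open>V \<in> \<O>\<close> unfolding \<O>_def by auto
  have "minimal_closed_meeting X \<K> (topspace X - V)"
    unfolding minimal_closed_meeting_def
  proof (intro conjI ballI allI impI)
    show "closedin X (topspace X - V)"
      using V(1) by auto
    show "(topspace X - V) \<inter> K \<noteq> {}" if "K \<in> \<K>" for K
      using V(3) that compactin_subset_topspace[OF compact[OF that]] by blast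
    fix A' assume A': "closedin X A' \<and> A' \<subseteq> topspace X - V \<and> (\<forall>K\<in>\<K>. A' \<inter> K \<noteq> {})"
    then have "topspace X - A' \<in> \<O>"
      using V(2) unfolding \<O>_def by blast
    moreover have "V \<subseteq> topspace X - A'"
      using A' openin_subset[OF V(1)] by blast
    ultimately show "A' = topspace X - V"
      using V_max A' closedin_subset by blast
  qed
  moreover have "topspace X - V \<subseteq> B"
    using V(2) by blast
  ultimately show ?thesis
    by blast
qed

definition down_inter_closed :: "'a topology \<Rightarrow> bool" where
  "down_inter_closed X \<longleftrightarrow> (\<forall>C K. closedin X C \<and> C \<noteq> {} \<and> C \<noteq> topspace X \<and> K \<in> KX X
     \<longrightarrow> closedin X (down_set X (C \<inter> K)))"

lemma filtered_K_saturated: "filtered_K X \<K> \<Longrightarrow> K \<in> \<K> \<Longrightarrow> saturated X K"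
  unfolding filtered_K_def KX_def by blast

lemma filtered_K_compactin: "filtered_K X \<K> \<Longrightarrow> K \<in> \<K> \<Longrightarrow> compactin X K"
  unfolding filtered_K_def KX_def by blast

lemma minimal_closed_meeting_eq_down_set:
  assumes down_closed: "down_inter_closed X"
    and filtered: "filtered_K X \<K>" and "K \<in> \<K>"
    and minimal: "minimal_closed_meeting X \<K> A" and "A \<noteq> topspace X"
  shows "down_set X (A \<inter> K) = A"
proof -
  have "closedin X A" and A_meets: "\<forall>K\<in>\<K>. A \<inter> K \<noteq> {}"
    using minimal unfolding minimal_closed_meeting_def by auto
  have "A \<noteq> {}" "K \<in> KX X"
    using A_meets filtered \<open>K \<in> \<K>\<close> unfolding filtered_K_def by auto
  then have "closedin X (down_set X (A \<inter> K))"
    using down_closed \<open>closedin X A\<close> \<open>A \<noteq> topspace X\<close> unfolding down_inter_closed_def by blast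
  moreover have "down_set X (A \<inter> K) \<subseteq> A"
    using down_set_subset_closedin[OF \<open>closedin X A\<close>] by blast
  moreover have "down_set X (A \<inter> K) \<inter> K' \<noteq> {}" if "K' \<in> \<K>" for K'
  proof -
    obtain K'' where "K'' \<in> \<K>" "K'' \<subseteq> K" "K'' \<subseteq> K'"
      using filtered \<open>K \<in> \<K>\<close> \<open>K' \<in> \<K>\<close> unfolding filtered_K_def by meson
    moreover obtain x where "x \<in> A" "x \<in> K''"
      using A_meets \<open>K'' \<in> \<K>\<close> by blast
    moreover have "A \<inter> K \<subseteq> down_set X (A \<inter> K)"
      using subset_down_set[of "A \<inter> K" X] closedin_subset[OF \<open>closedin X A\<close>] by blast
    ultimately show ?thesis
      by blast
  qed
  ultimately show ?thesis
    using minimal unfolding minimal_closed_meeting_def by blast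
qed

text \<open>A maximal point of a minimal \<open>A\<close> is below a point of \<open>A \<inter> K\<close>, hence equal to it.\<close>
lemma d_space_closedin_meets_Inter_filtered:
  assumes "d_space X"
    and down_closed: "down_inter_closed X"
    and filtered: "filtered_K X \<K>"
    and "closedin X B" "B \<noteq> topspace X" and B_meets: "\<forall>K\<in>\<K>. B \<inter> K \<noteq> {}"
  shows "B \<inter> \<Inter>\<K> \<noteq> {}"
proof -
  obtain A where "A \<subseteq> B" and minimal: "minimal_closed_meeting X \<K> A"
    using exists_minimal_closed_meeting[OF filtered_K_compactin[OF filtered] \<open>closedin X B\<close> B_meets]
    by blast
  then have "closedin X A" and A_meets: "\<forall>K\<in>\<K>. A \<inter> K \<noteq> {}"
    unfolding minimal_closed_meeting_def by auto
  have "A \<noteq> topspace X"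
    using \<open>A \<subseteq> B\<close> \<open>B \<noteq> topspace X\<close> closedin_subset[OF \<open>closedin X B\<close>] by blast
  obtain K0 where "K0 \<in> \<K>"
    using filtered unfolding filtered_K_def by blast
  then obtain a where "a \<in> A"
    using A_meets by blast
  obtain m where "m \<in> A" "spec_le X a m" and m_max: "\<And>y. y \<in> A \<Longrightarrow> spec_le X m y \<Longrightarrow> y = m"
    using d_space_maximal_above[OF \<open>d_space X\<close> \<open>closedin X A\<close> \<open>a \<in> A\<close>] by blast
  have "m \<in> K" if "K \<in> \<K>" for K
  proof -
    have "down_set X (A \<inter> K) = A"
      using minimal_closed_meeting_eq_down_set[OF down_closed filtered that minimal \<open>A \<noteq> topspace X\<close>] .
    then obtain k where "k \<in> A \<inter> K" "spec_le X m k"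
      using \<open>m \<in> A\<close> unfolding down_set_def by blast
    then show "m \<in> K"
      using m_max by blast
  qed
  then show ?thesis
    using \<open>m \<in> A\<close> \<open>A \<subseteq> B\<close> by blast
qed

lemma d_space_filtered_K_inter_subset_openin:
  assumes "d_space X" and down_closed: "down_inter_closed X"
    and filtered: "filtered_K X \<K>" and "G \<in> KX X" "openin X U" "U \<noteq> {}" "\<Inter>\<K> \<inter> G \<subseteq> U"
  shows "\<exists>K\<in>\<K>. K \<inter> G \<subseteq> U"
proof (rule ccontr)
  assume "\<not> (\<exists>K\<in>\<K>. K \<inter> G \<subseteq> U)"
  then have meets: "\<forall>K\<in>\<K>. (topspace X - U) \<inter> G \<inter> K \<noteq> {}"
    using filtered_K_saturated[OF filtered] unfolding saturated_def by blast
  obtain K0 where "K0 \<in> \<K>"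
    using filtered unfolding filtered_K_def by blast
  define B where "B = down_set X ((topspace X - U) \<inter> G)"
  have "closedin X (topspace X - U)" "topspace X - U \<noteq> {}" "topspace X - U \<noteq> topspace X"
    using \<open>openin X U\<close> meets \<open>K0 \<in> \<K>\<close> \<open>U \<noteq> {}\<close> openin_subset[OF \<open>openin X U\<close>] by blast+
  then have "closedin X B"
    using down_closed \<open>G \<in> KX X\<close> unfolding down_inter_closed_def B_def by blast
  moreover have "B \<noteq> topspace X"
    unfolding B_def
    by (rule d_space_down_set_ne_topspace[OF assms(1) \<open>openin X U\<close> \<open>U \<noteq> {}\<close>]) blast
  moreover have "\<forall>K\<in>\<K>. B \<inter> K \<noteq> {}"
    using meets subset_down_set[of "(topspace X - U) \<inter> G" X] unfolding B_def by blast
  ultimately have "B \<inter> \<Inter>\<K> \<noteq> {}"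
    by (rule d_space_closedin_meets_Inter_filtered[OF assms(1) down_closed filtered])
  then obtain m c where m: "m \<in> \<Inter>\<K>" "spec_le X m c" and c: "c \<in> (topspace X - U) \<inter> G"
    unfolding B_def down_set_def by blast
  have "c \<in> \<Inter>\<K>"
  proof
    fix K assume "K \<in> \<K>"
    then show "c \<in> K"
      using saturated_spec_le_upward[OF filtered_K_saturated[OF filtered \<open>K \<in> \<K>\<close>] _ m(2)] m(1)
      by blast
  qed
  then show False
    using c \<open>\<Inter>\<K> \<inter> G \<subseteq> U\<close> by blast
qed

theorem mainTheorem11:
  fixes X :: "'a topology"
  assumes "d_space X"
    and "\<And>C K. closedin X C \<Longrightarrow> C \<noteq> {} \<Longrightarrow> C \<noteq> topspace X \<Longrightarrow> K \<in> KX X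
           \<Longrightarrow> closedin X (down_set X (C \<inter> K))"
  shows "S_star_well_filtered X"
proof -
  have "down_inter_closed X"
    using assms(2) unfolding down_inter_closed_def by blast
  then show ?thesis
    using d_space_filtered_K_inter_subset_openin[OF assms(1)] unfolding S_star_well_filtered_def by blast
qed

end
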